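(* Let $k,\nu,\eta>0$, and let $(u,A)$ be a (sufficiently regular) solution on $\mathbb{T}^2\times(0,T)$ of the equation $\partial_tA+u\cdot\nabla_xA=(\nabla_xu)A+A(\nabla_xu)^T-2((\nabla_xu):A)A-2k(2A-\mathbb{I}_2)+\nu\Delta_xA$ with $u$ divergence-free. Suppose that $(\nabla_xu):A\in L^1(0,T;L^\infty)$, $\mathrm{Tr}\,A(0)\equiv1$ and $A(0)$ is positive definite. Then for all $t\in[0,T]$, $A(t)$ remains positive definite with $\mathrm{Tr}\,A(t)\equiv1$.
   Context: $A$ takes values in real symmetric $2\times2$ matrices, $u:\mathbb{T}^2\times(0,T)\to\mathbb{R}^2$ with $\nabla_x\cdot u=0$, $\mathbb{T}^2$ is the 2-torus, and $B:C=\sum_{ij}B_{ij}C_{ij}$. *)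

theory Defs
  imports "HOL-Analysis.Analysis"
begin

text \<open>Points of the torus T^2 are represented by points of real^2; functions on T^2
  are functions on real^2 that are 1-periodic in each coordinate direction.\<close>

definition periodic2 :: "(real^2 \<Rightarrow> 'b) \<Rightarrow> bool" where
  "periodic2 f \<longleftrightarrow> (\<forall>x i. f (x + axis i 1) = f x)"

definition ddot :: "real^2^2 \<Rightarrow> real^2^2 \<Rightarrow> real" where
  "ddot B C = (\<Sum>i\<in>UNIV. \<Sum>j\<in>UNIV. B $ i $ j * C $ i $ j)"

definition pos_def :: "real^2^2 \<Rightarrow> bool" where
  "pos_def M \<longleftrightarrow> (\<forall>v::real^2. v \<noteq> 0 \<longrightarrow> 0 < v \<bullet> (M *v v))"

text \<open>Velocity gradient: (grad u)_ij = d_j u_i, given the partial derivatives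
  Du j = d_j u.\<close>
definition gradmat :: "(2 \<Rightarrow> real^2) \<Rightarrow> real^2^2" where
  "gradmat Du = (\<chi> i j. Du j $ i)"

end

theory Submission
  imports Defs
begin

text \<open>Taking the trace of the equation, \<open>\<tau> = tr A - 1\<close> solves the linear equation
  \<open>\<tau>\<^sub>t + u\<cdot>\<nabla>\<tau> = -(2 (\<nabla>u):A + 4k) \<tau> + \<nu>\<Delta>\<tau>\<close>, so comparing \<open>\<plusminus>\<tau>\<close> with the barriers
  \<open>\<epsilon> exp (2 G t)\<close>, \<open>G t = \<integral>\<^sub>0\<^sup>t g\<close> with \<open>g\<close> the \<open>L\<^sup>1 L\<^sup>\<infinity>\<close> bound on \<open>(\<nabla>u):A\<close>, gives \<open>\<tau> \<equiv> 0\<close>.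
  Once \<open>tr A \<equiv> 1\<close>, at a spatial minimum of \<open>det A\<close> the first derivatives of \<open>det A\<close> vanish and
  its Laplacian is nonnegative (\<open>\<partial>\<^sub>iA\<close> is symmetric and traceless, so \<open>det \<partial>\<^sub>iA \<le> 0\<close>), whence
  \<open>\<partial>\<^sub>t det A \<ge> -(4 |(\<nabla>u):A| + 8k) det A\<close> there; comparison with \<open>\<delta> exp (-4 G t - 10 k t)\<close>
  keeps \<open>det A\<close> positive. A symmetric 2x2 matrix with positive trace and determinant is
  positive definite. Each comparison looks at the first time the quantity reaches the barrier,
  which exists by compactness of the torus; since \<open>g\<close> is merely integrable, the barrier is
  not differentiable and is controlled through left difference quotients.\<close>

lemma periodic2_add_of_int:
  assumes "periodic2 f"
  shows "f (x + of_int n *\<^sub>R axis i 1) = f x"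
proof (induction n arbitrary: x rule: int_induct[where k=0])
  case base
  then show ?case by simp
next
  case (step1 n)
  have "f (x + of_int (n + 1) *\<^sub>R axis i 1) = f ((x + of_int n *\<^sub>R axis i 1) + axis i 1)"
    by (simp add: algebra_simps)
  also have "\<dots> = f x"
    using assms step1 unfolding periodic2_def by simp
  finally show ?case .
next
  case (step2 n)
  have "f (x + of_int (n - 1) *\<^sub>R axis i 1) = f ((x + of_int (n - 1) *\<^sub>R axis i 1) + axis i 1)"
    using assms unfolding periodic2_def by simp
  also have "\<dots> = f (x + of_int n *\<^sub>R axis i 1)"
    by (simp add: algebra_simps)
  finally show ?case
    using step2 by simp
qed

definition torus_rep :: "real^2 \<Rightarrow> real^2" where
  "torus_rep x = (\<chi> i. frac (x $ i))"

lemma torus_rep_in_cbox: "torus_rep x \<in> cbox 0 1"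
  unfolding torus_rep_def by (auto simp: mem_box_cart frac_lt_1 less_imp_le)

lemma periodic2_torus_rep:
  assumes "periodic2 f"
  shows "f (torus_rep x) = f x"
proof -
  have "x = (torus_rep x + of_int \<lfloor>x $ 1\<rfloor> *\<^sub>R axis 1 1) + of_int \<lfloor>x $ 2\<rfloor> *\<^sub>R axis 2 1"
    by (simp add: torus_rep_def vec_eq_iff forall_2 axis_def frac_def)
  then show ?thesis
    using periodic2_add_of_int[OF assms] by metis
qed

lemma periodic2_compose: "periodic2 f \<Longrightarrow> periodic2 (\<lambda>x. F (f x))"
  by (simp add: periodic2_def)

lemma periodic2_attains_inf:
  fixes f :: "real^2 \<Rightarrow> real"
  assumes "continuous_on UNIV f" and "periodic2 f"
  obtains x0 where "\<And>x. f x0 \<le> f x"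
proof -
  obtain x0 where "\<And>y. y \<in> cbox 0 1 \<Longrightarrow> f x0 \<le> f y"
    using continuous_attains_inf[OF compact_cbox _ continuous_on_subset[OF assms(1)]]
      torus_rep_in_cbox by blast
  then show ?thesis
    using that torus_rep_in_cbox periodic2_torus_rep[OF assms(2)] by metis
qed

lemma continuous_on_slice:
  assumes "continuous_on (UNIV \<times> S) (\<lambda>(x, t). F x t)"
  shows "continuous_on S (F y)"
proof -
  have "continuous_on S (\<lambda>t. (\<lambda>(x, t). F x t) (y, t))"
    by (rule continuous_on_compose2[OF assms]) (auto intro!: continuous_intros)
  then show ?thesis by simp
qed

lemma DERIV_global_max_second_deriv:
  fixes f f' :: "real \<Rightarrow> real"
  assumes f': "\<And>s. (f has_real_derivative f' s) (at s)"
    and f'': "(f' has_real_derivative L) (at 0)"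
    and max: "\<And>s. f s \<le> f 0"
  shows "f' 0 = 0" and "L \<le> 0"
proof -
  show crit: "f' 0 = 0"
    using DERIV_local_max[OF f'[of 0], of 1] max by auto
  show "L \<le> 0"
  proof (rule ccontr)
    assume "\<not> L \<le> 0"
    then obtain e where e: "e > 0" "\<And>h. h > 0 \<Longrightarrow> h < e \<Longrightarrow> f' 0 < f' (0 + h)"
      using DERIV_pos_inc_right[OF f''] by (metis not_le)
    obtain z where z: "0 < z" "z < e/2" "f (e/2) - f 0 = (e/2 - 0) * f' z"
      using MVT2[of 0 "e/2" f f'] f' e(1) by auto
    have "(e/2) * f' z > 0"
      using e z crit by simp
    then have "f (e/2) > f 0"
      using z(3) by simp
    then show False
      using max[of "e/2"] by simp
  qed
qed

lemma exp_mult_diff_le: "exp b * (a - b) \<le> exp a - exp (b::real)"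
proof -
  have "exp b * (1 + (a - b)) \<le> exp b * exp (a - b)"
    by (rule mult_left_mono) simp_all
  then show ?thesis
    by (simp add: algebra_simps flip: exp_add)
qed

lemma exp_left_growth:
  fixes \<phi> :: "real \<Rightarrow> real"
  assumes \<phi>: "(\<phi> \<longlongrightarrow> \<phi> t) (at_left t)"
    and growth: "\<forall>\<^sub>F s in at_left t. L * (t - s) \<le> \<phi> t - \<phi> s"
    and "L' < L"
  shows "\<forall>\<^sub>F s in at_left t. L' * exp (\<phi> t) * (t - s) \<le> exp (\<phi> t) - exp (\<phi> s)"
proof -
  have "((\<lambda>s. L * exp (\<phi> s)) \<longlongrightarrow> L * exp (\<phi> t)) (at_left t)"
    by (intro tendsto_intros \<phi>)
  moreover have "L' * exp (\<phi> t) < L * exp (\<phi> t)"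
    using \<open>L' < L\<close> by simp
  ultimately have "\<forall>\<^sub>F s in at_left t. L' * exp (\<phi> t) < L * exp (\<phi> s)"
    by (rule order_tendstoD)
  moreover have "\<forall>\<^sub>F s in at_left t. s < t"
    by (simp add: eventually_at_filter)
  ultimately show ?thesis
    using growth
  proof eventually_elim
    case (elim s)
    have "L' * exp (\<phi> t) * (t - s) \<le> L * exp (\<phi> s) * (t - s)"
      using elim(1,2) by (simp add: mult_right_mono)
    also have "\<dots> = exp (\<phi> s) * (L * (t - s))"
      by simp
    also have "\<dots> \<le> exp (\<phi> s) * (\<phi> t - \<phi> s)"
      using elim(3) by (simp add: mult_left_mono)
    also have "\<dots> \<le> exp (\<phi> t) - exp (\<phi> s)"
      by (rule exp_mult_diff_le)
    finally show ?case .
  qed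
qed

lemma exp_neg_left_growth:
  fixes \<mu> :: "real \<Rightarrow> real"
  assumes growth: "\<forall>\<^sub>F s in at_left t. L * (t - s) \<le> \<mu> t - \<mu> s" and "\<delta> \<ge> 0"
  shows "\<forall>\<^sub>F s in at_left t. L * (\<delta> * exp (- \<mu> t)) * (t - s) \<le> \<delta> * exp (- \<mu> s) - \<delta> * exp (- \<mu> t)"
  using growth
proof eventually_elim
  case (elim s)
  have "L * (\<delta> * exp (- \<mu> t)) * (t - s) = \<delta> * (exp (- \<mu> t) * (L * (t - s)))"
    by (simp add: algebra_simps)
  also have "\<dots> \<le> \<delta> * (exp (- \<mu> t) * (\<mu> t - \<mu> s))"
    using elim \<open>\<delta> \<ge> 0\<close> by (simp add: mult_left_mono)
  also have "\<dots> \<le> \<delta> * (exp (- \<mu> s) - exp (- \<mu> t))"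
    using exp_mult_diff_le[of "- \<mu> t" "- \<mu> s"] \<open>\<delta> \<ge> 0\<close> by (simp add: mult_left_mono)
  finally show ?case
    by (simp add: algebra_simps)
qed

lemma integral_left_growth:
  fixes g h :: "real \<Rightarrow> real"
  assumes g: "g integrable_on {0..T}" and h: "continuous_on {0<..<T} h"
    and hg: "\<And>r. r \<in> {0<..<T} \<Longrightarrow> h r \<le> g r" and t: "t \<in> {0<..<T}" and "\<delta> > 0"
  shows "\<forall>\<^sub>F s in at_left t. (h t - \<delta>) * (t - s) \<le> integral {0..t} g - integral {0..s} g"
proof -
  have "isCont h t"
    using continuous_on_eq_continuous_at[of "{0<..<T}" h] h t by simp
  then obtain d where d: "d > 0" "\<And>r. r \<noteq> t \<Longrightarrow> norm (r - t) < d \<Longrightarrow> norm (h r - h t) < \<delta>"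
    unfolding isCont_def LIM_eq using \<open>\<delta> > 0\<close> by blast
  have "\<forall>\<^sub>F s in at_left t. s \<in> {max 0 (t - d)<..<t}"
    by (rule eventually_at_left_real) (use t d in auto)
  then show ?thesis
  proof (rule eventually_mono)
    fix s assume s: "s \<in> {max 0 (t - d)<..<t}"
    have "integral {s..t} (\<lambda>_. h t - \<delta>) \<le> integral {s..t} g"
    proof (rule integral_le)
      show "g integrable_on {s..t}"
        using integrable_subinterval_real[OF g] s t by auto
      fix r assume r: "r \<in> {s..t}"
      have "h t - \<delta> \<le> h r"
        using d(2)[of r] r s \<open>\<delta> > 0\<close> by (cases "r = t") auto
      also have "h r \<le> g r"
        using hg r s t by auto
      finally show "h t - \<delta> \<le> g r" .
    qed (rule integrable_const_ivl)
    moreover have "integral {0..s} g + integral {s..t} g = integral {0..t} g"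
      using Henstock_Kurzweil_Integration.integral_combine[OF _ _ integrable_subinterval_real[OF g]] s t by auto
    ultimately show "(h t - \<delta>) * (t - s) \<le> integral {0..t} g - integral {0..s} g"
      using s by (simp add: mult.commute)
  qed
qed

lemma first_touch_derivative_ge:
  fixes \<phi> b :: "real \<Rightarrow> real"
  assumes \<phi>: "(\<phi> has_real_derivative D) (at t)" and touch: "\<phi> t = b t"
    and below: "\<forall>s\<in>{0..<t}. \<phi> s < b s" and "t > 0"
    and growth: "\<forall>\<^sub>F s in at_left t. L * (t - s) \<le> b t - b s"
  shows "L \<le> D"
proof -
  have "((\<lambda>s. (\<phi> s - \<phi> t) / (s - t)) \<longlongrightarrow> D) (at_left t)"
    using \<phi> has_field_derivative_iff tendsto_mono[OF at_le] by blast
  moreover have "\<forall>\<^sub>F s in at_left t. L \<le> (\<phi> s - \<phi> t) / (s - t)"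
    using eventually_at_left_real[OF \<open>t > 0\<close>] growth
  proof eventually_elim
    case (elim s)
    moreover have "\<phi> s < b s"
      using below elim(1) by simp
    ultimately have "L * (t - s) \<le> \<phi> t - \<phi> s"
      using touch by simp
    then have "L \<le> (\<phi> t - \<phi> s) / (t - s)"
      using elim(1) by (simp add: pos_le_divide_eq)
    then show ?case
      by (metis minus_diff_eq minus_divide_divide)
  qed
  ultimately show ?thesis
    by (rule tendsto_lowerbound) simp
qed

lemma periodic_earliest_crossing:
  fixes q :: "real^2 \<Rightarrow> real \<Rightarrow> real" and b :: "real \<Rightarrow> real"
  assumes qc: "continuous_on (UNIV \<times> {0..T}) (\<lambda>(x, t). q x t)"
    and bc: "continuous_on {0..T} b"
    and per: "\<And>t. periodic2 (\<lambda>x. q x t)"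
    and t1: "t1 \<in> {0..T}" "b t1 \<le> q x1 t1"
  obtains xs ts where "ts \<in> {0..t1}" "b ts \<le> q xs ts" "\<And>y s. s \<in> {0..<ts} \<Longrightarrow> q y s < b s"
proof -
  \<comment> \<open>by periodicity it suffices to look for crossings over the unit square, where they form a compact set\<close>
  define S where "S = {p \<in> cbox 0 1 \<times> {0..t1}. b (snd p) \<le> q (fst p) (snd p)}"
  define f where "f p = q (fst p) (snd p) - b (snd p)" for p
  have "continuous_on (cbox 0 1 \<times> {0..t1}) f"
    unfolding f_def
  proof (intro continuous_intros)
    show "continuous_on (cbox 0 1 \<times> {0..t1}) (\<lambda>p. q (fst p) (snd p))"
      by (rule continuous_on_subset[OF qc[unfolded case_prod_beta']]) (use t1 in auto)
    show "continuous_on (cbox 0 1 \<times> {0..t1}) (\<lambda>p. b (snd p))"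
      by (rule continuous_on_compose2[OF bc continuous_on_snd]) (use t1 in auto)
  qed
  moreover have S_eq: "S = (cbox 0 1 \<times> {0..t1}) \<inter> f -` {0..}"
    by (auto simp: S_def f_def)
  ultimately have "closed S"
    by (auto intro: continuous_closed_preimage closed_Times)
  then have "compact (cbox 0 1 \<times> {0..t1} \<inter> S)"
    by (intro compact_Int_closed compact_Times compact_cbox compact_Icc)
  then have "compact S"
    by (simp add: S_eq Int_left_absorb)
  moreover have "(torus_rep x1, t1) \<in> S"
    using t1 torus_rep_in_cbox periodic2_torus_rep[OF per] unfolding S_def by auto
  ultimately obtain p where "p \<in> S" "\<And>p'. p' \<in> S \<Longrightarrow> snd p \<le> snd p'"
    using continuous_attains_inf[of S snd] continuous_on_snd[OF continuous_on_id] by blast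
  then obtain xs ts where min: "(xs, ts) \<in> S" "\<And>p'. p' \<in> S \<Longrightarrow> ts \<le> snd p'"
    by (metis prod.collapse)
  show ?thesis
  proof
    show "ts \<in> {0..t1}" "b ts \<le> q xs ts"
      using min(1) unfolding S_def by auto
    fix y s
    assume s: "s \<in> {0..<ts}"
    show "q y s < b s"
    proof (rule ccontr)
      assume "\<not> q y s < b s"
      then have "(torus_rep y, s) \<in> S"
        using s min(1) torus_rep_in_cbox periodic2_torus_rep[OF per] unfolding S_def by auto
      then show False
        using min(2) s by force
    qed
  qed
qed

lemma periodic_first_touch:
  fixes q :: "real^2 \<Rightarrow> real \<Rightarrow> real" and b :: "real \<Rightarrow> real"
  assumes qc: "continuous_on (UNIV \<times> {0..T}) (\<lambda>(x, t). q x t)"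
    and bc: "continuous_on {0..T} b"
    and per: "\<And>t. periodic2 (\<lambda>x. q x t)"
    and init: "\<And>x. q x 0 < b 0"
    and crossing: "\<not> (\<forall>t\<in>{0..<T}. \<forall>x. q x t < b t)"
  obtains x t where "t \<in> {0<..<T}" "q x t = b t" "\<forall>y. q y t \<le> b t" "\<forall>s\<in>{0..<t}. q x s < b s"
proof -
  obtain t1 x1 where t1: "t1 \<in> {0..<T}" "b t1 \<le> q x1 t1"
    using crossing not_less by blast
  then have "t1 \<in> {0..T}"
    by simp
  then obtain xs ts where ts: "ts \<in> {0..t1}" "b ts \<le> q xs ts"
    and before: "\<And>y s. s \<in> {0..<ts} \<Longrightarrow> q y s < b s"
    using periodic_earliest_crossing[OF qc bc per _ t1(2)] by metis
  have "ts \<noteq> 0"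
    using ts init[of xs] by force
  have at_ts: "q y ts \<le> b ts" for y
  proof -
    have "continuous_on {0..T} (\<lambda>s. q y s - b s)"
      using continuous_on_slice[OF qc] bc by (intro continuous_intros)
    then have "q y ts - b ts \<le> 0"
      by (rule continuous_le_on_closure[where S = "{0..<ts}", OF continuous_on_subset])
        (use \<open>ts \<noteq> 0\<close> ts t1 before in \<open>auto simp: less_imp_le\<close>)
    then show ?thesis
      by simp
  qed
  show ?thesis
  proof
    show "ts \<in> {0<..<T}" "\<forall>s\<in>{0..<ts}. q xs s < b s"
      using ts t1 \<open>ts \<noteq> 0\<close> before by auto
    show "q xs ts = b ts" "\<forall>y. q y ts \<le> b ts"
      using ts(2) at_ts by (auto intro: antisym)
  qed
qed

lemma periodic_barrier_principle:
  fixes q :: "real^2 \<Rightarrow> real \<Rightarrow> real" and b :: "real \<Rightarrow> real"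
  assumes qc: "continuous_on (UNIV \<times> {0..T}) (\<lambda>(x, t). q x t)"
    and bc: "continuous_on {0..T} b"
    and per: "\<And>t. periodic2 (\<lambda>x. q x t)"
    and init: "\<And>x. q x 0 < b 0"
    and touch: "\<And>x t. t \<in> {0<..<T} \<Longrightarrow> q x t = b t \<Longrightarrow> \<forall>y. q y t \<le> b t \<Longrightarrow>
      \<exists>D L. (q x has_real_derivative D) (at t) \<and> D < L \<and>
        (\<forall>\<^sub>F s in at_left t. L * (t - s) \<le> b t - b s)"
  shows "\<forall>t\<in>{0..<T}. \<forall>x. q x t < b t"
proof (rule ccontr)
  assume "\<not> ?thesis"
  then obtain x t where t: "t \<in> {0<..<T}" "q x t = b t" "\<forall>y. q y t \<le> b t" "\<forall>s\<in>{0..<t}. q x s < b s"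
    by (rule periodic_first_touch[OF qc bc per init])
  then obtain D L where "(q x has_real_derivative D) (at t)" "D < L"
    "\<forall>\<^sub>F s in at_left t. L * (t - s) \<le> b t - b s"
    using touch by blast
  with t show False
    using first_touch_derivative_ge[of "q x" D t b L] by auto
qed

lemma trace_2: "trace (M::'a::comm_semiring_1^2^2) = M$1$1 + M$2$2"
  by (simp add: trace_def sum_2)

lemma matrix_mult_2_nth: "((G::'a::comm_semiring_1^2^2) ** M) $ i $ j = G$i$1 * M$1$j + G$i$2 * M$2$j"
  by (simp add: matrix_matrix_mult_def sum_2)

lemma ddot_2: "ddot G M = G$1$1 * M$1$1 + G$1$2 * M$1$2 + G$2$1 * M$2$1 + G$2$2 * M$2$2"
  by (simp add: ddot_def sum_2)

lemma symmetric_2_nth: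
  assumes "transpose (M::'a^2^2) = M"
  shows "M$2$1 = M$1$2"
proof -
  have "transpose M $ 1 $ 2 = M $ 1 $ 2"
    by (simp only: assms)
  then show ?thesis
    by (simp add: transpose_def)
qed

lemma det_nonpos_if_symmetric_traceless:
  fixes P :: "real^2^2"
  assumes "transpose P = P" and "trace P = 0"
  shows "det P \<le> 0"
proof -
  have "det P = - ((P$1$1)\<^sup>2 + (P$1$2)\<^sup>2)"
    using assms symmetric_2_nth[OF assms(1)]
    by (simp add: det_2 trace_2 power2_eq_square eq_neg_iff_add_eq_0[symmetric])
  then show ?thesis
    by simp
qed

lemma pos_def_imp_det_pos:
  fixes M :: "real^2^2"
  assumes sym: "transpose M = M" and pd: "pos_def M"
  shows "det M > 0"
proof -
  have "0 < axis 1 1 \<bullet> (M *v axis 1 (1::real))"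
    using pd unfolding pos_def_def by (simp add: axis_eq_0_iff)
  then have a: "M$1$1 > 0"
    by (simp add: inner_vec_def matrix_vector_mult_def sum_2 axis_def)
  define v :: "real^2" where "v = (\<chi> i. if i = 1 then M$1$2 else - M$1$1)"
  have v: "v$1 = M$1$2" "v$2 = - M$1$1"
    unfolding v_def by simp_all
  then have "v \<noteq> 0"
    using a by force
  then have "0 < v \<bullet> (M *v v)"
    using pd unfolding pos_def_def by blast
  also have "v \<bullet> (M *v v) = M$1$1 * det M"
    by (simp add: inner_vec_def matrix_vector_mult_def sum_2 v det_2 symmetric_2_nth[OF sym]
        algebra_simps power2_eq_square)
  finally show ?thesis
    using a by (simp add: zero_less_mult_iff)
qed

lemma pos_def_if_det_pos:
  fixes M :: "real^2^2"
  assumes sym: "transpose M = M" and tr: "trace M > 0" and det: "det M > 0"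
  shows "pos_def M"
  unfolding pos_def_def
proof (intro allI impI)
  fix v :: "real^2"
  assume "v \<noteq> 0"
  define a b c where "a = M$1$1" and "b = M$1$2" and "c = M$2$2"
  have "a + c > 0" "a * c - b * b > 0"
    using tr det symmetric_2_nth[OF sym] by (simp_all add: a_def b_def c_def trace_2 det_2)
  then have "a > 0"
    by (smt (verit) mult_nonpos_nonneg zero_le_square)
  have form: "v \<bullet> (M *v v) = a * (v$1)\<^sup>2 + 2 * b * v$1 * v$2 + c * (v$2)\<^sup>2"
    by (simp add: inner_vec_def matrix_vector_mult_def sum_2 symmetric_2_nth[OF sym]
        a_def b_def c_def algebra_simps power2_eq_square)
  have "a * (v \<bullet> (M *v v)) = (a * v$1 + b * v$2)\<^sup>2 + (a * c - b * b) * (v$2)\<^sup>2"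
    unfolding form by (simp add: algebra_simps power2_eq_square)
  moreover have "(a * v$1 + b * v$2)\<^sup>2 + (a * c - b * b) * (v$2)\<^sup>2 > 0"
  proof (cases "v$2 = 0")
    case True
    then have "v$1 \<noteq> 0"
      using \<open>v \<noteq> 0\<close> by (simp add: vec_eq_iff forall_2)
    then show ?thesis
      using True \<open>a > 0\<close> by simp
  next
    case False
    then show ?thesis
      using \<open>a * c - b * b > 0\<close> by (simp add: add_nonneg_pos)
  qed
  ultimately have "0 < a * (v \<bullet> (M *v v))"
    by simp
  then show "0 < v \<bullet> (M *v v)"
    using \<open>a > 0\<close> by (metis zero_less_mult_pos)
qed

text \<open>\<open>cof_pair M N = trace (adj M ** N)\<close> is the polarisation of \<open>det\<close> on 2x2 matrices, hence also
  the derivative of \<open>det\<close> at \<open>M\<close> in direction \<open>N\<close>.\<close>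

definition cof_pair :: "real^2^2 \<Rightarrow> real^2^2 \<Rightarrow> real" where
  "cof_pair M N = M$2$2 * N$1$1 + M$1$1 * N$2$2 - M$1$2 * N$2$1 - M$2$1 * N$1$2"

lemma cof_pair_self: "cof_pair M M = 2 * det M"
  by (simp add: cof_pair_def det_2)

lemma cof_pair_commute: "cof_pair M N = cof_pair N M"
  by (simp add: cof_pair_def algebra_simps)

lemma cof_pair_linear_right:
  "cof_pair M (X + Y) = cof_pair M X + cof_pair M Y"
  "cof_pair M (X - Y) = cof_pair M X - cof_pair M Y"
  "cof_pair M (r *\<^sub>R X) = r * cof_pair M X"
  by (simp_all add: cof_pair_def algebra_simps)

lemma cof_pair_mat1: "cof_pair M (mat 1) = trace M"
  by (simp add: cof_pair_def trace_2 mat_def)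

lemma cof_pair_mult_left: "cof_pair M (G ** M) = det M * trace G"
  by (simp add: cof_pair_def matrix_mult_2_nth det_2 trace_2 algebra_simps)

lemma cof_pair_mult_transpose: "cof_pair M (M ** transpose G) = det M * trace G"
  by (simp add: cof_pair_def matrix_mult_2_nth transpose_def det_2 trace_2 algebra_simps)

lemma has_vector_derivative_matrix_nth:
  fixes f :: "real \<Rightarrow> real^'n^'m"
  assumes "(f has_vector_derivative f') F"
  shows "((\<lambda>s. f s $ i $ j) has_real_derivative f' $ i $ j) F"
proof -
  have "bounded_linear (\<lambda>M::real^'n^'m. M $ i $ j)"
    using bounded_linear_compose[OF bounded_linear_vec_nth[of j] bounded_linear_vec_nth[of i]]
    by (simp add: o_def)
  from bounded_linear.has_vector_derivative[OF this assms] show ?thesis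
    by (simp add: has_real_derivative_iff_has_vector_derivative)
qed

lemma has_vector_derivative_trace:
  fixes f :: "real \<Rightarrow> real^2^2"
  assumes "(f has_vector_derivative f') F"
  shows "((\<lambda>s. trace (f s)) has_real_derivative trace f') F"
  unfolding trace_2 by (intro Deriv.field_differentiable_add has_vector_derivative_matrix_nth[OF assms])

lemma has_vector_derivative_cof_pair:
  fixes f h :: "real \<Rightarrow> real^2^2"
  assumes f: "(f has_vector_derivative f') (at t)" and h: "(h has_vector_derivative h') (at t)"
  shows "((\<lambda>s. cof_pair (f s) (h s)) has_real_derivative cof_pair f' (h t) + cof_pair (f t) h') (at t)"
  unfolding cof_pair_def
  by (auto intro!: derivative_eq_intros has_vector_derivative_matrix_nth[OF f]
      has_vector_derivative_matrix_nth[OF h] simp: algebra_simps)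

lemma has_vector_derivative_det_2:
  fixes f :: "real \<Rightarrow> real^2^2"
  assumes "(f has_vector_derivative f') (at t)"
  shows "((\<lambda>s. det (f s)) has_real_derivative cof_pair (f t) f') (at t)"
proof -
  have "((\<lambda>s. cof_pair (f s) (f s) / 2) has_real_derivative
      (cof_pair f' (f t) + cof_pair (f t) f') / 2) (at t)"
    by (intro DERIV_cdivide has_vector_derivative_cof_pair assms)
  then show ?thesis
    by (simp add: cof_pair_self cof_pair_commute[of f'])
qed

text \<open>Right-hand side of the equation for \<open>A\<close>, with \<open>G\<close> standing for \<open>\<nabla>u\<close>, \<open>M\<close> for \<open>A\<close> and \<open>L\<close> for \<open>\<Delta>A\<close>.\<close>

definition conformation_rhs ::
    "real \<Rightarrow> real \<Rightarrow> real^2^2 \<Rightarrow> real^2^2 \<Rightarrow> real^2^2 \<Rightarrow> real^2^2" where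
  "conformation_rhs k \<nu> G M L =
    G ** M + M ** transpose G - (2 * ddot G M) *\<^sub>R M - (2 * k) *\<^sub>R (2 *\<^sub>R M - mat 1) + \<nu> *\<^sub>R L"

lemma trace_scaleR: "trace (r *\<^sub>R (M::real^2^2)) = r * trace M"
  by (simp add: trace_2 algebra_simps)

lemma trace_mult_symmetric:
  assumes "transpose M = M"
  shows "trace (G ** M) = ddot G M" and "trace (M ** transpose G) = ddot G M"
  using symmetric_2_nth[OF assms]
  by (simp_all add: trace_2 matrix_mult_2_nth transpose_def ddot_2 algebra_simps)

lemma trace_conformation_rhs:
  assumes "transpose M = M"
  shows "trace (conformation_rhs k \<nu> G M L) = - (2 * ddot G M + 4 * k) * (trace M - 1) + \<nu> * trace L"
proof -
  have "trace (mat 1 :: real^2^2) = 2"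
    by (simp add: trace_I)
  then show ?thesis
    by (simp add: conformation_rhs_def trace_add trace_sub trace_scaleR trace_mult_symmetric[OF assms]
        algebra_simps)
qed

lemma cof_pair_conformation_rhs:
  assumes "trace G = 0"
  shows "cof_pair M (conformation_rhs k \<nu> G M L)
    = - 4 * ddot G M * det M - 2 * k * (4 * det M - trace M) + \<nu> * cof_pair M L"
  by (simp add: conformation_rhs_def cof_pair_linear_right cof_pair_mult_left
      cof_pair_mult_transpose cof_pair_self cof_pair_mat1 assms)

locale conformation_flow =
  fixes k \<nu> T :: real
    and u :: "real^2 \<Rightarrow> real \<Rightarrow> real^2"
    and A :: "real^2 \<Rightarrow> real \<Rightarrow> real^2^2"
    and Du :: "2 \<Rightarrow> real^2 \<Rightarrow> real \<Rightarrow> real^2"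
    and At :: "real^2 \<Rightarrow> real \<Rightarrow> real^2^2"
    and DA :: "2 \<Rightarrow> real^2 \<Rightarrow> real \<Rightarrow> real^2^2"
    and D2A :: "2 \<Rightarrow> 2 \<Rightarrow> real^2 \<Rightarrow> real \<Rightarrow> real^2^2"
    and g :: "real \<Rightarrow> real"
  assumes k_pos: "k > 0" and nu_pos: "\<nu> > 0" and T_pos: "T > 0"
    and A_per: "\<And>t. periodic2 (\<lambda>x. A x t)"
    and A_sym: "\<And>x t. t \<in> {0..T} \<Longrightarrow> transpose (A x t) = A x t"
    and A_cont: "continuous_on (UNIV \<times> {0..T}) (\<lambda>(x, t). A x t)"
    and At_deriv: "\<And>x t. t \<in> {0<..<T} \<Longrightarrow> ((\<lambda>s. A x s) has_vector_derivative At x t) (at t)"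
    and DA_deriv: "\<And>i x t. t \<in> {0<..<T} \<Longrightarrow>
        ((\<lambda>s. A (x + s *\<^sub>R axis i 1) t) has_vector_derivative DA i x t) (at 0)"
    and D2A_deriv: "\<And>i j x t. t \<in> {0<..<T} \<Longrightarrow>
        ((\<lambda>s. DA i (x + s *\<^sub>R axis j 1) t) has_vector_derivative D2A i j x t) (at 0)"
    and Du_cont: "\<And>i. continuous_on (UNIV \<times> {0<..<T}) (\<lambda>(x, t). Du i x t)"
    and div_free: "\<And>x t. t \<in> {0<..<T} \<Longrightarrow> (\<Sum>i\<in>UNIV. Du i x t $ i) = 0"
    and eqn: "\<And>x t. t \<in> {0<..<T} \<Longrightarrow>
        At x t + (\<Sum>i\<in>UNIV. u x t $ i *\<^sub>R DA i x t)
        = gradmat (\<lambda>i. Du i x t) ** A x t + A x t ** transpose (gradmat (\<lambda>i. Du i x t))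
          - (2 * ddot (gradmat (\<lambda>i. Du i x t)) (A x t)) *\<^sub>R A x t
          - (2 * k) *\<^sub>R (2 *\<^sub>R A x t - mat 1)
          + \<nu> *\<^sub>R (\<Sum>i\<in>UNIV. D2A i i x t)"
    and g_integrable: "g integrable_on {0..T}"
    and g_bound: "\<And>t x. t \<in> {0<..<T} \<Longrightarrow> \<bar>ddot (gradmat (\<lambda>i. Du i x t)) (A x t)\<bar> \<le> g t"
    and init_trace: "\<And>x. trace (A x 0) = 1"
    and init_pos_def: "\<And>x. pos_def (A x 0)"
begin

definition stretch :: "real^2 \<Rightarrow> real \<Rightarrow> real" where
  "stretch x t = ddot (gradmat (\<lambda>i. Du i x t)) (A x t)"

definition G :: "real \<Rightarrow> real" where
  "G t = integral {0..t} g"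

lemma G_continuous: "continuous_on {0..T} G"
  unfolding G_def by (rule indefinite_integral_continuous_1[OF g_integrable])

lemma G_0: "G 0 = 0"
  by (simp add: G_def)

lemma continuous_on_compose_A:
  assumes "continuous_on UNIV f"
  shows "continuous_on (UNIV \<times> {0..T}) (\<lambda>(x, t). f (A x t))"
  using continuous_on_compose2[OF assms A_cont] by (simp add: case_prod_beta')

lemma stretch_continuous: "continuous_on {0<..<T} (stretch x)"
proof -
  have "continuous_on {0<..<T} (A x)"
    by (rule continuous_on_subset[OF continuous_on_slice[OF A_cont]]) auto
  moreover have "continuous_on {0<..<T} (Du i x)" for i
    by (rule continuous_on_slice[OF Du_cont])
  ultimately show ?thesis
    unfolding stretch_def ddot_2 gradmat_def by (auto intro!: continuous_intros)
qed

lemma G_left_growth: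
  assumes "t \<in> {0<..<T}" and "\<delta> > 0"
  shows "\<forall>\<^sub>F s in at_left t. (\<bar>stretch x t\<bar> - \<delta>) * (t - s) \<le> G t - G s"
  unfolding G_def
  by (rule integral_left_growth[OF g_integrable _ _ assms])
    (use stretch_continuous g_bound in \<open>auto intro: continuous_intros simp: stretch_def\<close>)

lemma A_line_deriv:
  assumes "t \<in> {0<..<T}"
  shows "((\<lambda>s. A (x + s *\<^sub>R axis i 1) t) has_vector_derivative DA i (x + s *\<^sub>R axis i 1) t) (at s)"
proof -
  have "((\<lambda>r. A ((x + s *\<^sub>R axis i 1) + r *\<^sub>R axis i 1) t) \<circ> (\<lambda>r. r - s)
      has_vector_derivative 1 *\<^sub>R DA i (x + s *\<^sub>R axis i 1) t) (at s)"
    by (rule vector_diff_chain_at) (auto intro!: derivative_eq_intros DA_deriv[OF assms])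
  moreover have "((\<lambda>r. A ((x + s *\<^sub>R axis i 1) + r *\<^sub>R axis i 1) t) \<circ> (\<lambda>r. r - s))
      = (\<lambda>r. A (x + r *\<^sub>R axis i 1) t)"
    by (auto simp: algebra_simps)
  ultimately show ?thesis
    by simp
qed

lemma DA_symmetric:
  assumes "t \<in> {0<..<T}"
  shows "transpose (DA i x t) = DA i x t"
proof -
  let ?A = "\<lambda>s. A (x + s *\<^sub>R axis i 1) t"
  have "A y t $ 2 $ 1 = A y t $ 1 $ 2" for y
    by (rule symmetric_2_nth[OF A_sym]) (use assms in auto)
  then have "(\<lambda>s. ?A s $ 2 $ 1) = (\<lambda>s. ?A s $ 1 $ 2)"
    by simp
  moreover have "((\<lambda>s. ?A s $ a $ b) has_real_derivative DA i x t $ a $ b) (at 0)" for a b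
    by (rule has_vector_derivative_matrix_nth[OF DA_deriv[OF assms]])
  ultimately have "DA i x t $ 2 $ 1 = DA i x t $ 1 $ 2"
    using DERIV_unique by metis
  then show ?thesis
    by (simp add: vec_eq_iff forall_2 transpose_def)
qed

lemma trace_DA:
  assumes "t \<in> {0<..<T}" and "\<And>y. trace (A y t) = 1"
  shows "trace (DA i x t) = 0"
proof -
  have "((\<lambda>s. trace (A (x + s *\<^sub>R axis i 1) t)) has_real_derivative trace (DA i x t)) (at 0)"
    by (rule has_vector_derivative_trace[OF DA_deriv[OF assms(1)]])
  then show ?thesis
    using assms(2) DERIV_unique[OF _ DERIV_const] by simp
qed

lemma trace_gradmat:
  assumes "t \<in> {0<..<T}"
  shows "trace (gradmat (\<lambda>i. Du i x t)) = 0"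
  using div_free[OF assms] by (simp add: trace_def gradmat_def)

lemma At_eq:
  assumes "t \<in> {0<..<T}"
  shows "At x t = conformation_rhs k \<nu> (gradmat (\<lambda>i. Du i x t)) (A x t) (D2A 1 1 x t + D2A 2 2 x t)
    - (u x t $ 1 *\<^sub>R DA 1 x t + u x t $ 2 *\<^sub>R DA 2 x t)"
  using eqn[OF assms, of x] unfolding conformation_rhs_def sum_2 by (simp add: algebra_simps)

lemma G_tendsto_left:
  assumes "t \<in> {0<..<T}"
  shows "(G \<longlongrightarrow> G t) (at_left t)"
proof -
  have "isCont G t"
    using continuous_on_interior[OF G_continuous] assms by simp
  then show ?thesis
    unfolding isCont_def by (rule tendsto_mono[OF at_le, rotated]) simp
qed

lemma trace_At:
  assumes "t \<in> {0<..<T}"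
  shows "trace (At x t) = - (2 * stretch x t + 4 * k) * (trace (A x t) - 1)
    + \<nu> * (trace (D2A 1 1 x t) + trace (D2A 2 2 x t))
    - (u x t $ 1 * trace (DA 1 x t) + u x t $ 2 * trace (DA 2 x t))"
  using A_sym[of t x] assms
  by (simp add: At_eq[OF assms] trace_sub trace_add trace_scaleR trace_conformation_rhs stretch_def)

lemma cof_pair_At:
  assumes "t \<in> {0<..<T}"
  shows "cof_pair (A x t) (At x t) = - 4 * stretch x t * det (A x t) - 2 * k * (4 * det (A x t) - trace (A x t))
    + \<nu> * (cof_pair (A x t) (D2A 1 1 x t) + cof_pair (A x t) (D2A 2 2 x t))
    - (u x t $ 1 * cof_pair (A x t) (DA 1 x t) + u x t $ 2 * cof_pair (A x t) (DA 2 x t))"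
  by (simp add: At_eq[OF assms] cof_pair_linear_right cof_pair_conformation_rhs trace_gradmat[OF assms]
      stretch_def)

lemma trace_spatial_max:
  assumes t: "t \<in> {0<..<T}" and max: "\<And>y. \<sigma> * trace (A y t) \<le> \<sigma> * trace (A x t)"
  shows "\<sigma> * trace (DA i x t) = 0" and "\<sigma> * trace (D2A i i x t) \<le> 0"
proof -
  let ?f = "\<lambda>s. \<sigma> * trace (A (x + s *\<^sub>R axis i 1) t)"
  let ?f' = "\<lambda>s. \<sigma> * trace (DA i (x + s *\<^sub>R axis i 1) t)"
  have "(?f has_real_derivative ?f' s) (at s)" for s
    by (intro DERIV_cmult has_vector_derivative_trace A_line_deriv[OF t])
  moreover have "(?f' has_real_derivative \<sigma> * trace (D2A i i x t)) (at 0)"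
    by (intro DERIV_cmult has_vector_derivative_trace D2A_deriv[OF t])
  moreover have "?f s \<le> ?f 0" for s
    using max by simp
  ultimately show "\<sigma> * trace (DA i x t) = 0" and "\<sigma> * trace (D2A i i x t) \<le> 0"
    using DERIV_global_max_second_deriv[of ?f ?f'] by auto
qed

lemma det_spatial_min:
  assumes t: "t \<in> {0<..<T}" and tr: "\<And>y. trace (A y t) = 1"
    and min: "\<And>y. det (A x t) \<le> det (A y t)"
  shows "cof_pair (A x t) (DA i x t) = 0" and "0 \<le> cof_pair (A x t) (D2A i i x t)"
proof -
  let ?A = "\<lambda>s. A (x + s *\<^sub>R axis i 1) t" and ?P = "\<lambda>s. DA i (x + s *\<^sub>R axis i 1) t"
  have first: "((\<lambda>s. - det (?A s)) has_real_derivative - cof_pair (?A s) (?P s)) (at s)" for s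
    by (intro DERIV_minus has_vector_derivative_det_2 A_line_deriv[OF t])
  have "((\<lambda>s. - cof_pair (?A s) (?P s)) has_real_derivative
      - (cof_pair (DA i x t) (DA i x t) + cof_pair (A x t) (D2A i i x t))) (at 0)"
    using DERIV_minus[OF has_vector_derivative_cof_pair[OF A_line_deriv[OF t, of x i 0] D2A_deriv[OF t]]]
    by simp
  note max_rule = DERIV_global_max_second_deriv[OF first this]
  have "- det (?A s) \<le> - det (?A 0)" for s
    using min by simp
  then have "cof_pair (A x t) (DA i x t) = 0"
    and "0 \<le> cof_pair (DA i x t) (DA i x t) + cof_pair (A x t) (D2A i i x t)"
    using max_rule by auto
  moreover have "cof_pair (DA i x t) (DA i x t) \<le> 0"
    using det_nonpos_if_symmetric_traceless[OF DA_symmetric[OF t] trace_DA[OF t tr]]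
    by (simp add: cof_pair_self)
  ultimately show "cof_pair (A x t) (DA i x t) = 0" and "0 \<le> cof_pair (A x t) (D2A i i x t)"
    by auto
qed

lemma trace_touch_derivative_bound:
  assumes t: "t \<in> {0<..<T}" and max: "\<And>y. \<sigma> * trace (A y t) \<le> \<sigma> * trace (A x t)"
    and pos: "\<sigma> * (trace (A x t) - 1) > 0"
  shows "\<sigma> * trace (At x t) \<le> (2 * \<bar>stretch x t\<bar> - 4 * k) * (\<sigma> * (trace (A x t) - 1))"
proof -
  note spatial = trace_spatial_max[OF t max]
  have "\<sigma> * trace (At x t) = - (2 * stretch x t + 4 * k) * (\<sigma> * (trace (A x t) - 1))
      + \<nu> * (\<sigma> * trace (D2A 1 1 x t) + \<sigma> * trace (D2A 2 2 x t))
      - (u x t $ 1 * (\<sigma> * trace (DA 1 x t)) + u x t $ 2 * (\<sigma> * trace (DA 2 x t)))"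
    unfolding trace_At[OF t] by (simp add: algebra_simps)
  also have "\<dots> = - (2 * stretch x t + 4 * k) * (\<sigma> * (trace (A x t) - 1))
      + \<nu> * (\<sigma> * trace (D2A 1 1 x t) + \<sigma> * trace (D2A 2 2 x t))"
    by (simp only: spatial(1) mult_zero_right add_0_right diff_0_right)
  also have "\<dots> \<le> - (2 * stretch x t + 4 * k) * (\<sigma> * (trace (A x t) - 1))"
    using spatial(2)[of 1] spatial(2)[of 2] nu_pos by (simp add: mult_nonneg_nonpos)
  also have "\<dots> \<le> (2 * \<bar>stretch x t\<bar> - 4 * k) * (\<sigma> * (trace (A x t) - 1))"
    using pos by (intro mult_right_mono) auto
  finally show ?thesis .
qed

lemma trace_barrier:
  assumes \<epsilon>: "\<epsilon> > 0"
  shows "\<forall>t\<in>{0..<T}. \<forall>x. \<sigma> * (trace (A x t) - 1) < \<epsilon> * exp (2 * G t)"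
proof (rule periodic_barrier_principle)
  show "continuous_on (UNIV \<times> {0..T}) (\<lambda>(x, t). \<sigma> * (trace (A x t) - 1))"
    by (rule continuous_on_compose_A) (auto simp: trace_2 intro!: continuous_intros)
  show "continuous_on {0..T} (\<lambda>t. \<epsilon> * exp (2 * G t))"
    by (intro continuous_intros G_continuous)
  show "periodic2 (\<lambda>x. \<sigma> * (trace (A x t) - 1))" for t
    by (rule periodic2_compose[OF A_per])
  show "\<sigma> * (trace (A x 0) - 1) < \<epsilon> * exp (2 * G 0)" for x
    using init_trace \<epsilon> by simp
  fix x t
  assume t: "t \<in> {0<..<T}" and touch: "\<sigma> * (trace (A x t) - 1) = \<epsilon> * exp (2 * G t)"
    and below: "\<forall>y. \<sigma> * (trace (A y t) - 1) \<le> \<epsilon> * exp (2 * G t)"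
  define B C where "B = \<epsilon> * exp (2 * G t)" and "C = \<bar>stretch x t\<bar>"
  have "B > 0"
    using \<epsilon> by (simp add: B_def)
  have max: "\<sigma> * trace (A y t) \<le> \<sigma> * trace (A x t)" for y
    using touch below by (simp add: algebra_simps)
  have pos: "\<sigma> * (trace (A x t) - 1) > 0"
    using touch \<open>B > 0\<close> by (simp add: B_def)
  have "\<sigma> * trace (At x t) \<le> (2 * C - 4 * k) * B"
    using trace_touch_derivative_bound[OF t max pos] unfolding touch B_def C_def .
  moreover have "(2 * C - 4 * k) * B < (2 * C - 3 * k) * B"
    using \<open>B > 0\<close> k_pos by (intro mult_strict_right_mono) auto
  ultimately have D: "\<sigma> * trace (At x t) < (2 * C - 3 * k) * B"
    by linarith
  have "((\<lambda>s. 2 * G s) \<longlongrightarrow> 2 * G t) (at_left t)"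
    by (intro tendsto_intros G_tendsto_left[OF t])
  moreover have "\<forall>\<^sub>F s in at_left t. 2 * (C - k) * (t - s) \<le> 2 * G t - 2 * G s"
    using G_left_growth[OF t k_pos, of x] by (auto elim!: eventually_mono simp: C_def algebra_simps)
  ultimately have "\<forall>\<^sub>F s in at_left t. (2 * C - 3 * k) * exp (2 * G t) * (t - s) \<le> exp (2 * G t) - exp (2 * G s)"
    by (rule exp_left_growth) (use k_pos in simp)
  then have "\<forall>\<^sub>F s in at_left t. (2 * C - 3 * k) * B * (t - s) \<le> \<epsilon> * exp (2 * G t) - \<epsilon> * exp (2 * G s)"
    by eventually_elim (use \<epsilon> in \<open>simp add: B_def mult_left_mono right_diff_distrib[symmetric]\<close>)
  moreover have "((\<lambda>s. \<sigma> * (trace (A x s) - 1)) has_real_derivative \<sigma> * trace (At x t)) (at t)"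
    using has_vector_derivative_trace[OF At_deriv[OF t]] by (auto intro!: derivative_eq_intros)
  ultimately show "\<exists>D L. ((\<lambda>s. \<sigma> * (trace (A x s) - 1)) has_real_derivative D) (at t) \<and> D < L \<and>
      (\<forall>\<^sub>F s in at_left t. L * (t - s) \<le> \<epsilon> * exp (2 * G t) - \<epsilon> * exp (2 * G s))"
    using D by blast
qed

lemma trace_eq_1:
  assumes "t \<in> {0..T}"
  shows "trace (A x t) = 1"
proof -
  have before_T: "trace (A x t) = 1" if t: "t \<in> {0..<T}" for t
  proof -
    have "\<sigma> * (trace (A x t) - 1) \<le> 0" for \<sigma> :: real
    proof (rule field_le_epsilon)
      fix e :: real
      assume "e > 0"
      then show "\<sigma> * (trace (A x t) - 1) \<le> 0 + e"
        using trace_barrier[of "e / exp (2 * G t)" \<sigma>, rule_format, of t x] t by simp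
    qed
    from this[of 1] this[of "-1"] show ?thesis
      by simp
  qed
  show ?thesis
  proof (rule continuous_constant_on_closure[of "{0..<T}" "\<lambda>t. trace (A x t)"])
    show "continuous_on (closure {0..<T}) (\<lambda>t. trace (A x t))"
      using continuous_on_slice[OF A_cont] T_pos unfolding trace_2 by (simp add: continuous_intros)
    show "t \<in> closure {0..<T}"
      using assms T_pos by simp
  qed (rule before_T)
qed

lemma det_touch_derivative_bound:
  assumes t: "t \<in> {0<..<T}" and min: "\<And>y. det (A x t) \<le> det (A y t)" and pos: "det (A x t) > 0"
  shows "- cof_pair (A x t) (At x t) \<le> (4 * \<bar>stretch x t\<bar> + 8 * k) * det (A x t)"
proof -
  have tr: "trace (A y t) = 1" for y
    using t by (intro trace_eq_1) auto
  note spatial = det_spatial_min[OF t tr min]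
  have "- cof_pair (A x t) (At x t) = 4 * stretch x t * det (A x t) + 8 * k * det (A x t) - 2 * k
      - \<nu> * (cof_pair (A x t) (D2A 1 1 x t) + cof_pair (A x t) (D2A 2 2 x t))
      + (u x t $ 1 * cof_pair (A x t) (DA 1 x t) + u x t $ 2 * cof_pair (A x t) (DA 2 x t))"
    unfolding cof_pair_At[OF t] tr by (simp add: algebra_simps)
  also have "\<dots> \<le> 4 * stretch x t * det (A x t) + 8 * k * det (A x t)"
  proof -
    have "0 \<le> \<nu> * (cof_pair (A x t) (D2A 1 1 x t) + cof_pair (A x t) (D2A 2 2 x t))"
      using spatial(2)[of 1] spatial(2)[of 2] nu_pos by simp
    then show ?thesis
      using k_pos by (simp add: spatial(1))
  qed
  also have "\<dots> \<le> (4 * \<bar>stretch x t\<bar> + 8 * k) * det (A x t)"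
    using pos by (simp add: algebra_simps mult_right_mono)
  finally show ?thesis .
qed

lemma init_det_bounded_below:
  obtains \<delta> where "\<delta> > 0" and "\<And>x. \<delta> < det (A x 0)"
proof -
  have "continuous_on UNIV (\<lambda>x. (\<lambda>(x, t). A x t) (x, 0))"
    by (rule continuous_on_compose2[OF A_cont]) (use T_pos in \<open>auto intro!: continuous_intros\<close>)
  then have "continuous_on UNIV (\<lambda>x. det (A x 0))"
    unfolding det_2 by (simp add: continuous_intros)
  then obtain x0 where x0: "\<And>x. det (A x0 0) \<le> det (A x 0)"
    using periodic2_attains_inf[OF _ periodic2_compose[OF A_per]] by metis
  have "det (A x0 0) > 0"
    using pos_def_imp_det_pos[OF A_sym init_pos_def] T_pos by simp
  show ?thesis
  proof (rule that)
    show "det (A x0 0) / 2 > 0" and "det (A x0 0) / 2 < det (A x 0)" for x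
      using \<open>det (A x0 0) > 0\<close> x0[of x] by simp_all
  qed
qed

lemma det_barrier:
  obtains \<delta> where "\<delta> > 0" and "\<And>t x. t \<in> {0..<T} \<Longrightarrow> \<delta> * exp (- (4 * G t + 10 * k * t)) < det (A x t)"
proof -
  obtain \<delta> where "\<delta> > 0" and init: "\<And>x. \<delta> < det (A x 0)"
    using init_det_bounded_below by metis
  define \<mu> where "\<mu> t = 4 * G t + 10 * k * t" for t
  have "\<forall>t\<in>{0..<T}. \<forall>x. - det (A x t) < - \<delta> * exp (- \<mu> t)"
  proof (rule periodic_barrier_principle)
    show "continuous_on (UNIV \<times> {0..T}) (\<lambda>(x, t). - det (A x t))"
      by (rule continuous_on_compose_A) (auto simp: det_2 intro!: continuous_intros)
    show "continuous_on {0..T} (\<lambda>t. - \<delta> * exp (- \<mu> t))"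
      unfolding \<mu>_def by (intro continuous_intros G_continuous)
    show "periodic2 (\<lambda>x. - det (A x t))" for t
      by (rule periodic2_compose[OF A_per])
    show "- det (A x 0) < - \<delta> * exp (- \<mu> 0)" for x
      using init[of x] by (simp add: \<mu>_def G_0)
    fix x t
    assume t: "t \<in> {0<..<T}" and touch: "- det (A x t) = - \<delta> * exp (- \<mu> t)"
      and below: "\<forall>y. - det (A y t) \<le> - \<delta> * exp (- \<mu> t)"
    define C where "C = \<bar>stretch x t\<bar>"
    have det: "det (A x t) = \<delta> * exp (- \<mu> t)" and "det (A x t) > 0"
      using touch \<open>\<delta> > 0\<close> by auto
    have "det (A x t) \<le> det (A y t)" for y
      using below det by (simp add: algebra_simps)
    from det_touch_derivative_bound[OF t this \<open>det (A x t) > 0\<close>]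
    have "- cof_pair (A x t) (At x t) \<le> (4 * C + 8 * k) * det (A x t)"
      unfolding C_def .
    moreover have "(4 * C + 8 * k) * det (A x t) < (4 * C + 9 * k) * det (A x t)"
      using \<open>det (A x t) > 0\<close> k_pos by (intro mult_strict_right_mono) auto
    ultimately have D: "- cof_pair (A x t) (At x t) < (4 * C + 9 * k) * det (A x t)"
      by linarith
    have "k / 4 > 0"
      using k_pos by simp
    from G_left_growth[OF t this, of x]
    have "\<forall>\<^sub>F s in at_left t. (4 * C + 9 * k) * (t - s) \<le> \<mu> t - \<mu> s"
    proof eventually_elim
      case (elim s)
      have "(4 * C + 9 * k) * (t - s) = 4 * ((C - k / 4) * (t - s)) + 10 * k * (t - s)"
        by (simp add: field_simps)
      also have "\<dots> \<le> 4 * (G t - G s) + 10 * k * (t - s)"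
        using elim by (simp add: C_def)
      finally show ?case
        by (simp add: \<mu>_def algebra_simps)
    qed
    from exp_neg_left_growth[OF this less_imp_le[OF \<open>\<delta> > 0\<close>]]
    have "\<forall>\<^sub>F s in at_left t. (4 * C + 9 * k) * det (A x t) * (t - s)
        \<le> - \<delta> * exp (- \<mu> t) - - \<delta> * exp (- \<mu> s)"
      by (simp add: det)
    moreover have "((\<lambda>s. - det (A x s)) has_real_derivative - cof_pair (A x t) (At x t)) (at t)"
      by (intro DERIV_minus has_vector_derivative_det_2 At_deriv[OF t])
    ultimately show "\<exists>D L. ((\<lambda>s. - det (A x s)) has_real_derivative D) (at t) \<and> D < L \<and>
        (\<forall>\<^sub>F s in at_left t. L * (t - s) \<le> - \<delta> * exp (- \<mu> t) - - \<delta> * exp (- \<mu> s))"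
      using D by blast
  qed
  then show ?thesis
    using that \<open>\<delta> > 0\<close> by (simp add: \<mu>_def)
qed

lemma det_pos:
  assumes "t \<in> {0..T}"
  shows "det (A x t) > 0"
proof -
  obtain \<delta> where "\<delta> > 0" and barrier: "\<And>t. t \<in> {0..<T} \<Longrightarrow> \<delta> * exp (- (4 * G t + 10 * k * t)) < det (A x t)"
    using det_barrier by metis
  have "0 \<le> det (A x t) - \<delta> * exp (- (4 * G t + 10 * k * t))"
  proof (rule continuous_ge_on_closure[of "{0..<T}" "\<lambda>t. det (A x t) - \<delta> * exp (- (4 * G t + 10 * k * t))"])
    show "continuous_on (closure {0..<T}) (\<lambda>t. det (A x t) - \<delta> * exp (- (4 * G t + 10 * k * t)))"
      using continuous_on_slice[OF A_cont] T_pos unfolding det_2 by (simp add: continuous_intros G_continuous)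
    show "t \<in> closure {0..<T}"
      using assms T_pos by simp
    fix s
    assume "s \<in> {0..<T}"
    then show "0 \<le> det (A x s) - \<delta> * exp (- (4 * G s + 10 * k * s))"
      using barrier[of s] by simp
  qed
  moreover have "\<delta> * exp (- (4 * G t + 10 * k * t)) > 0"
    using \<open>\<delta> > 0\<close> by simp
  ultimately show ?thesis
    by linarith
qed

lemma pos_def_A:
  assumes "t \<in> {0..T}"
  shows "pos_def (A x t)"
  using pos_def_if_det_pos[OF A_sym[OF assms]] trace_eq_1[OF assms] det_pos[OF assms] by simp

end

theorem proposition1:
  fixes k \<nu> \<eta> T :: real
    and u :: "real^2 \<Rightarrow> real \<Rightarrow> real^2"
    and A :: "real^2 \<Rightarrow> real \<Rightarrow> real^2^2"
    and Du :: "2 \<Rightarrow> real^2 \<Rightarrow> real \<Rightarrow> real^2"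
    and At :: "real^2 \<Rightarrow> real \<Rightarrow> real^2^2"
    and DA :: "2 \<Rightarrow> real^2 \<Rightarrow> real \<Rightarrow> real^2^2"
    and D2A :: "2 \<Rightarrow> 2 \<Rightarrow> real^2 \<Rightarrow> real \<Rightarrow> real^2^2"
  assumes k_pos: "k > 0" and nu_pos: "\<nu> > 0" and eta_pos: "\<eta> > 0" and T_pos: "T > 0"
    \<comment> \<open>periodicity in space (functions on the torus)\<close>
    and u_per: "\<And>t. periodic2 (\<lambda>x. u x t)"
    and A_per: "\<And>t. periodic2 (\<lambda>x. A x t)"
    \<comment> \<open>A is symmetric-matrix valued\<close>
    and A_sym: "\<And>x t. t \<in> {0..T} \<Longrightarrow> transpose (A x t) = A x t"
    \<comment> \<open>regularity: derivatives exist and are continuous\<close>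
    and A_cont: "continuous_on (UNIV \<times> {0..T}) (\<lambda>(x, t). A x t)"
    and u_cont: "continuous_on (UNIV \<times> {0..T}) (\<lambda>(x, t). u x t)"
    and At_deriv: "\<And>x t. t \<in> {0<..<T} \<Longrightarrow> ((\<lambda>s. A x s) has_vector_derivative At x t) (at t)"
    and DA_deriv: "\<And>i x t. t \<in> {0<..<T} \<Longrightarrow>
        ((\<lambda>s. A (x + s *\<^sub>R axis i 1) t) has_vector_derivative DA i x t) (at 0)"
    and D2A_deriv: "\<And>i j x t. t \<in> {0<..<T} \<Longrightarrow>
        ((\<lambda>s. DA i (x + s *\<^sub>R axis j 1) t) has_vector_derivative D2A i j x t) (at 0)"
    and Du_deriv: "\<And>i x t. t \<in> {0<..<T} \<Longrightarrow>
        ((\<lambda>s. u (x + s *\<^sub>R axis i 1) t) has_vector_derivative Du i x t) (at 0)"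
    and At_cont: "continuous_on (UNIV \<times> {0<..<T}) (\<lambda>(x, t). At x t)"
    and DA_cont: "\<And>i. continuous_on (UNIV \<times> {0<..<T}) (\<lambda>(x, t). DA i x t)"
    and D2A_cont: "\<And>i j. continuous_on (UNIV \<times> {0<..<T}) (\<lambda>(x, t). D2A i j x t)"
    and Du_cont: "\<And>i. continuous_on (UNIV \<times> {0<..<T}) (\<lambda>(x, t). Du i x t)"
    \<comment> \<open>u divergence free\<close>
    and div_free: "\<And>x t. t \<in> {0<..<T} \<Longrightarrow> (\<Sum>i\<in>UNIV. Du i x t $ i) = 0"
    \<comment> \<open>the equation\<close>
    and eqn: "\<And>x t. t \<in> {0<..<T} \<Longrightarrow>
        At x t + (\<Sum>i\<in>UNIV. u x t $ i *\<^sub>R DA i x t)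
        = gradmat (\<lambda>i. Du i x t) ** A x t + A x t ** transpose (gradmat (\<lambda>i. Du i x t))
          - (2 * ddot (gradmat (\<lambda>i. Du i x t)) (A x t)) *\<^sub>R A x t
          - (2 * k) *\<^sub>R (2 *\<^sub>R A x t - mat 1)
          + \<nu> *\<^sub>R (\<Sum>i\<in>UNIV. D2A i i x t)"
    \<comment> \<open>(grad u) : A in L^1(0,T; L^infinity)\<close>
    and L1Linf: "\<exists>g. g integrable_on {0..T} \<and>
        (\<forall>t\<in>{0<..<T}. \<forall>x. \<bar>ddot (gradmat (\<lambda>i. Du i x t)) (A x t)\<bar> \<le> g t)"
    \<comment> \<open>initial data\<close>
    and init_tr: "\<And>x. trace (A x 0) = 1"
    and init_pd: "\<And>x. pos_def (A x 0)"
  shows "\<forall>t\<in>{0..T}. \<forall>x. pos_def (A x t) \<and> trace (A x t) = 1"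
proof -
  obtain g where g: "g integrable_on {0..T}"
    "\<And>t x. t \<in> {0<..<T} \<Longrightarrow> \<bar>ddot (gradmat (\<lambda>i. Du i x t)) (A x t)\<bar> \<le> g t"
    using L1Linf by blast
  interpret conformation_flow k \<nu> T u A Du At DA D2A g
    by unfold_locales (fact assms g)+
  show ?thesis
    using pos_def_A trace_eq_1 by blast
qed

end
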